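(* Let $\phi:R\to S$ be an epimorphism of commutative rings, where $S$ is a nonzero ring whose only idempotents are $0$ and $1$. Suppose $\phi(r)$ has a pointwise inverse in $S$ for every $r\in R$. Then $A=\mathrm{Im}(\phi)$ is an integral domain, and the ring map from the field of fractions of $A$ to $S$ extending the inclusion $A\subseteq S$ exists and is an isomorphism; in particular $S$ is a field isomorphic to the fraction field of $A$.
   Context: For $a,b$ in a commutative ring, $b$ is a pointwise inverse of $a$ if $a=a^2b$ and $b=b^2a$. Epimorphism means epimorphism in the category of commutative rings. *)

theory Defs
  imports "HOL-Algebra.Algebra"
begin

text \<open>HOL cannot quantify over all types inside a formula, so the
  test rings T range over all commutative rings whose carrier lives in the type of sets of
  pairs of elements of S.  This type is large enough to contain a copy of the tensor product
  of S with itself over R, which is the universal test object, so the notion coincides with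
  the categorical one.\<close>

definition ring_epi :: "('a, 'm) ring_scheme \<Rightarrow> ('b, 'n) ring_scheme \<Rightarrow> ('a \<Rightarrow> 'b) \<Rightarrow> bool" where
  "ring_epi R S f \<longleftrightarrow> f \<in> ring_hom R S \<and>
     (\<forall>(T :: ('b \<times> 'b) set ring) g h.
        cring T \<longrightarrow> g \<in> ring_hom S T \<longrightarrow> h \<in> ring_hom S T \<longrightarrow>
        (\<forall>r \<in> carrier R. g (f r) = h (f r)) \<longrightarrow> (\<forall>s \<in> carrier S. g s = h s))"

definition pointwise_inverse :: "('a, 'm) ring_scheme \<Rightarrow> 'a \<Rightarrow> 'a \<Rightarrow> bool" where
  "pointwise_inverse S a b \<longleftrightarrow> a \<in> carrier S \<and> b \<in> carrier S \<and>
     a = a \<otimes>\<^bsub>S\<^esub> a \<otimes>\<^bsub>S\<^esub> b \<and> b = b \<otimes>\<^bsub>S\<^esub> b \<otimes>\<^bsub>S\<^esub> a"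

definition frac_pairs :: "('a, 'm) ring_scheme \<Rightarrow> ('a \<times> 'a) set" where
  "frac_pairs D = carrier D \<times> (carrier D - {\<zero>\<^bsub>D\<^esub>})"

definition frac_rel :: "('a, 'm) ring_scheme \<Rightarrow> (('a \<times> 'a) \<times> ('a \<times> 'a)) set" where
  "frac_rel D = {((a, b), (c, d)). (a, b) \<in> frac_pairs D \<and> (c, d) \<in> frac_pairs D \<and>
                    a \<otimes>\<^bsub>D\<^esub> d = c \<otimes>\<^bsub>D\<^esub> b}"

definition frac_class :: "('a, 'm) ring_scheme \<Rightarrow> 'a \<times> 'a \<Rightarrow> ('a \<times> 'a) set" where
  "frac_class D p = frac_rel D `` {p}"

definition frac_mult :: "('a, 'm) ring_scheme \<Rightarrow> ('a \<times> 'a) set \<Rightarrow> ('a \<times> 'a) set \<Rightarrow> ('a \<times> 'a) set" where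
  "frac_mult D U V = \<Union>{frac_class D (fst p \<otimes>\<^bsub>D\<^esub> fst q, snd p \<otimes>\<^bsub>D\<^esub> snd q)
        | p q. p \<in> U \<and> q \<in> V}"

definition frac_add :: "('a, 'm) ring_scheme \<Rightarrow> ('a \<times> 'a) set \<Rightarrow> ('a \<times> 'a) set \<Rightarrow> ('a \<times> 'a) set" where
  "frac_add D U V = \<Union>{frac_class D (fst p \<otimes>\<^bsub>D\<^esub> snd q \<oplus>\<^bsub>D\<^esub> fst q \<otimes>\<^bsub>D\<^esub> snd p,
                      snd p \<otimes>\<^bsub>D\<^esub> snd q) | p q. p \<in> U \<and> q \<in> V}"

definition Frac :: "('a, 'm) ring_scheme \<Rightarrow> ('a \<times> 'a) set ring" where
  "Frac D = \<lparr> carrier = frac_pairs D // frac_rel D,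
     monoid.mult = frac_mult D,
     one = frac_class D (\<one>\<^bsub>D\<^esub>, \<one>\<^bsub>D\<^esub>),
     ring.zero = frac_class D (\<zero>\<^bsub>D\<^esub>, \<one>\<^bsub>D\<^esub>),
     ring.add = frac_add D \<rparr>"

end

theory Submission
  imports Defs
begin

text \<open>The image \<open>A\<close> of \<open>\<phi>\<close> is a subring of \<open>S\<close> in which every nonzero \<open>a\<close> is a unit: for a
  pointwise inverse \<open>b\<close> of \<open>a\<close> the product \<open>ab\<close> is idempotent, and \<open>ab \<noteq> 0\<close> because \<open>a = a(ab)\<close>.
  Hence \<open>A\<close> is a domain and the fractions \<open>a/b\<close> with \<open>a, b \<in> A\<close>, \<open>b \<noteq> 0\<close>, form a subfield \<open>K\<close>
  of \<open>S\<close> isomorphic to \<open>Frac A\<close>. As \<open>A \<subseteq> K\<close>, the inclusion \<open>K \<rightarrow> S\<close> is again an epimorphism.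
  An epimorphism out of a field is onto: choose a \<open>K\<close>-basis of \<open>S\<close> containing \<open>1\<close>; the maps
  \<open>s \<mapsto> s \<otimes> 1\<close> and \<open>s \<mapsto> 1 \<otimes> s\<close> into \<open>S \<otimes>\<^sub>K S\<close> agree on \<open>K\<close>, hence everywhere, and comparing
  coefficients of \<open>1 \<otimes> 1\<close> in the free \<open>S\<close>-module on the \<open>1 \<otimes> b\<close> shows that \<open>s\<close> equals its own
  \<open>1\<close>-coordinate, which lies in \<open>K\<close>. So \<open>S = K \<cong> Frac A\<close>.\<close>

lemma (in cring) finsum_swap:
  assumes "finite A" "finite C" "\<And>i j. i \<in> A \<Longrightarrow> j \<in> C \<Longrightarrow> f i j \<in> carrier R"
  shows "(\<Oplus>i\<in>A. \<Oplus>j\<in>C. f i j) = (\<Oplus>j\<in>C. \<Oplus>i\<in>A. f i j)"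
  using assms
proof (induction A rule: finite_induct)
  case empty
  then show ?case by (simp add: finsum_zero)
next
  case (insert a A)
  have "(\<Oplus>i\<in>insert a A. \<Oplus>j\<in>C. f i j) = (\<Oplus>j\<in>C. f a j) \<oplus> (\<Oplus>j\<in>C. \<Oplus>i\<in>A. f i j)"
    using insert by (subst finsum_insert) (auto intro!: finsum_closed)
  also have "\<dots> = (\<Oplus>j\<in>C. f a j \<oplus> (\<Oplus>i\<in>A. f i j))"
    using insert by (subst finsum_addf) (auto intro!: finsum_closed)
  also have "\<dots> = (\<Oplus>j\<in>C. \<Oplus>i\<in>insert a A. f i j)"
    using insert by (intro finsum_cong') (auto simp: finsum_insert)
  finally show ?case .
qed

lemma (in cring) finsum_zero_eqI: "(\<And>x. x \<in> A \<Longrightarrow> f x = \<zero>) \<Longrightarrow> finsum R f A = \<zero>"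
  by (rule add.finprod_one_eqI) auto

lemma (in cring) finsum_rotate3:
  assumes "finite A" "finite B" "finite C"
    and "\<And>a b c. a \<in> A \<Longrightarrow> b \<in> B \<Longrightarrow> c \<in> C \<Longrightarrow> f a b c \<in> carrier R"
  shows "(\<Oplus>a\<in>A. \<Oplus>b\<in>B. \<Oplus>c\<in>C. f a b c) = (\<Oplus>c\<in>C. \<Oplus>a\<in>A. \<Oplus>b\<in>B. f a b c)"
proof -
  have "(\<Oplus>a\<in>A. \<Oplus>b\<in>B. \<Oplus>c\<in>C. f a b c) = (\<Oplus>a\<in>A. \<Oplus>c\<in>C. \<Oplus>b\<in>B. f a b c)"
    using assms by (intro finsum_cong' finsum_swap) (auto intro!: finsum_closed)
  also have "\<dots> = (\<Oplus>c\<in>C. \<Oplus>a\<in>A. \<Oplus>b\<in>B. f a b c)"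
    using assms by (intro finsum_swap) (auto intro!: finsum_closed)
  finally show ?thesis .
qed

lemma (in cring) mult_mult_finsum:
  assumes "finite D" "a \<in> carrier R" "b \<in> carrier R"
    "\<And>d. d \<in> D \<Longrightarrow> k d \<in> carrier R" "\<And>d. d \<in> D \<Longrightarrow> g d \<in> carrier R"
  shows "a \<otimes> (b \<otimes> (\<Oplus>d\<in>D. k d \<otimes> g d)) = (\<Oplus>d\<in>D. a \<otimes> b \<otimes> k d \<otimes> g d)"
proof -
  have "(\<Oplus>d\<in>D. k d \<otimes> g d) \<in> carrier R" using assms by (auto intro!: finsum_closed)
  then have "a \<otimes> (b \<otimes> (\<Oplus>d\<in>D. k d \<otimes> g d)) = (a \<otimes> b) \<otimes> (\<Oplus>d\<in>D. k d \<otimes> g d)"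
    using assms by (simp add: m_assoc)
  also have "\<dots> = (\<Oplus>d\<in>D. a \<otimes> b \<otimes> k d \<otimes> g d)"
    using assms by (subst finsum_rdistr) (auto intro!: finsum_cong' simp: m_assoc)
  finally show ?thesis .
qed

lemma (in cring) finsum2_ldistr:
  assumes "finite U" "finite V" "y \<in> carrier R" "\<And>b c. b \<in> U \<Longrightarrow> c \<in> V \<Longrightarrow> h b c \<in> carrier R"
  shows "(\<Oplus>b\<in>U. \<Oplus>c\<in>V. h b c) \<otimes> y = (\<Oplus>b\<in>U. \<Oplus>c\<in>V. h b c \<otimes> y)"
  using assms by (subst finsum_ldistr) (auto intro!: finsum_cong' finsum_closed simp: finsum_ldistr)

section \<open>Bases of a commutative ring over a subfield\<close>

locale cring_subfield = cring R + subfield K R for K and R (structure)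
begin

lemma subfield_subset: "K \<subseteq> carrier R"
  using subfieldE(3)[OF subfield_axioms] .

lemma subfield_closed:
  "\<zero> \<in> K" "\<one> \<in> K" "\<And>a b. a \<in> K \<Longrightarrow> b \<in> K \<Longrightarrow> a \<otimes> b \<in> K"
  "\<And>a b. a \<in> K \<Longrightarrow> b \<in> K \<Longrightarrow> a \<oplus> b \<in> K" "\<And>a. a \<in> K \<Longrightarrow> \<ominus> a \<in> K"
  using subringE[OF subfieldE(1)[OF subfield_axioms]] by auto

lemma subfield_elem_carrier: "k \<in> K \<Longrightarrow> k \<in> carrier R"
  using subfield_subset by auto

lemma subfield_inverse: "k \<in> K \<Longrightarrow> k \<noteq> \<zero> \<Longrightarrow> inv k \<in> K \<and> inv k \<otimes> k = \<one>"
  using subfield_m_inv[OF subfield_axioms, of k] by auto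

definition K_independent :: "'a set \<Rightarrow> bool" where
  "K_independent W \<longleftrightarrow> W \<subseteq> carrier R \<and> (\<forall>F c. finite F \<longrightarrow> F \<subseteq> W \<longrightarrow> c \<in> F \<rightarrow> K \<longrightarrow>
      (\<Oplus>x\<in>F. c x \<otimes> x) = \<zero> \<longrightarrow> (\<forall>x\<in>F. c x = \<zero>))"

definition K_span :: "'a set \<Rightarrow> 'a set" where
  "K_span W = {y. \<exists>F c. finite F \<and> F \<subseteq> W \<and> c \<in> F \<rightarrow> K \<and> y = (\<Oplus>x\<in>F. c x \<otimes> x)}"

lemma in_K_span: "W \<subseteq> carrier R \<Longrightarrow> x \<in> W \<Longrightarrow> x \<in> K_span W"
  unfolding K_span_def
  by (rule CollectI, rule exI[of _ "{x}"], rule exI[of _ "\<lambda>_. \<one>"]) (auto simp: subfield_closed)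

lemma K_independent_one: "K_independent {\<one>}"
  unfolding K_independent_def
proof (intro conjI allI impI ballI)
  fix F c x assume F: "finite F" "F \<subseteq> {\<one>}" "c \<in> F \<rightarrow> K" "(\<Oplus>x\<in>F. c x \<otimes> x) = \<zero>" "x \<in> F"
  then have "F = {\<one>}" "x = \<one>" by auto
  with F show "c x = \<zero>" using subfield_elem_carrier by auto
qed auto

lemma lin_comb_in_K_span:
  assumes F: "finite F" "F \<subseteq> M" "c \<in> F \<rightarrow> K" and M: "M \<subseteq> carrier R" and k: "k \<in> K"
  shows "k \<otimes> (\<Oplus>x\<in>F. c x \<otimes> x) \<in> K_span M"
proof -
  have "k \<otimes> (\<Oplus>x\<in>F. c x \<otimes> x) = (\<Oplus>x\<in>F. (k \<otimes> c x) \<otimes> x)"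
    using F M k subfield_subset
    by (subst finsum_rdistr) (auto intro!: finsum_cong' simp: m_assoc subset_iff Pi_def)
  then show ?thesis unfolding K_span_def using F k
    by (intro CollectI exI[of _ F] exI[of _ "\<lambda>x. k \<otimes> c x"]) (auto intro!: subfield_closed)
qed

lemma K_independent_insert:
  assumes M: "K_independent M" and y: "y \<in> carrier R" "y \<notin> K_span M"
  shows "K_independent (insert y M)"
  unfolding K_independent_def
proof (intro conjI allI impI)
  have Mc: "M \<subseteq> carrier R" using M K_independent_def by auto
  then show "insert y M \<subseteq> carrier R" using y by auto
  fix F c assume F: "finite F" "F \<subseteq> insert y M" "c \<in> F \<rightarrow> K" "(\<Oplus>x\<in>F. c x \<otimes> x) = \<zero>"
  define F' where "F' = F - {y}"
  define s where "s = (\<Oplus>x\<in>F'. c x \<otimes> x)"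
  have F': "finite F'" "F' \<subseteq> M" "c \<in> F' \<rightarrow> K" using F F'_def by auto
  have cR: "\<And>x. x \<in> F \<Longrightarrow> c x \<in> carrier R" using F(3) subfield_subset by (auto simp: Pi_def)
  have sR: "s \<in> carrier R" unfolding s_def using F' Mc cR F'_def by (intro finsum_closed) auto
  show "\<forall>x\<in>F. c x = \<zero>"
  proof (cases "y \<in> F")
    case False
    then show ?thesis using M F unfolding K_independent_def by blast
  next
    case True
    have yF: "F = insert y F'" "y \<notin> F'" using True F'_def by auto
    have eq: "c y \<otimes> y \<oplus> s = \<zero>"
      using F(4) F' Mc cR y unfolding yF(1) s_def by (subst (asm) finsum_insert) (auto simp: yF)
    have cy: "c y = \<zero>"
    proof (rule ccontr)
      assume ne: "c y \<noteq> \<zero>"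
      have cyK: "c y \<in> K" using F(3) True by auto
      obtain k where k: "k \<in> K" "k \<otimes> c y = \<one>" using subfield_inverse[OF cyK ne] by blast
      have kR: "k \<in> carrier R" "c y \<in> carrier R" using k cyK subfield_elem_carrier by auto
      have "k \<otimes> c y \<otimes> y \<oplus> k \<otimes> s = \<zero>"
        using arg_cong[OF eq, of "\<lambda>z. k \<otimes> z"] kR sR y by (simp add: r_distr m_assoc)
      then have "y = \<ominus> k \<otimes> s" using k(2) kR sR y by (simp add: l_minus minus_equality)
      then show False
        using y(2) lin_comb_in_K_span[OF F' Mc subfield_closed(5)[OF k(1)]] unfolding s_def by simp
    qed
    then have "s = \<zero>" using eq sR y by simp
    then have "\<forall>x\<in>F'. c x = \<zero>" using M F' unfolding K_independent_def s_def by blast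
    then show ?thesis using cy yF by auto
  qed
qed

lemma exists_K_basis: "\<exists>B. \<one> \<in> B \<and> K_independent B \<and> carrier R \<subseteq> K_span B"
proof -
  let ?A = "{W. \<one> \<in> W \<and> K_independent W}"
  have "\<exists>M\<in>?A. \<forall>W\<in>?A. M \<subseteq> W \<longrightarrow> W = M"
  proof (rule subset_Zorn)
    fix C assume ch: "subset.chain ?A C"
    show "\<exists>U\<in>?A. \<forall>W\<in>C. W \<subseteq> U"
    proof (cases "C = {}")
      case True then show ?thesis using K_independent_one by auto
    next
      case False
      have CA: "C \<subseteq> ?A" using ch by (auto simp: subset_chain_def)
      have "K_independent (\<Union>C)" unfolding K_independent_def
      proof (intro conjI allI impI)
        show "\<Union>C \<subseteq> carrier R" using CA by (auto simp: K_independent_def)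
        fix F c assume F: "finite F" "F \<subseteq> \<Union>C" "c \<in> F \<rightarrow> K" "(\<Oplus>x\<in>F. c x \<otimes> x) = \<zero>"
        obtain W where "W \<in> C" "F \<subseteq> W"
          using finite_subset_Union_chain[OF F(1) F(2) False ch] by blast
        then show "\<forall>x\<in>F. c x = \<zero>" using CA F unfolding K_independent_def by blast
      qed
      moreover have "\<one> \<in> \<Union>C" using False CA by blast
      ultimately show ?thesis by blast
    qed
  qed
  then obtain M where M: "\<one> \<in> M" "K_independent M" and max: "\<forall>W\<in>?A. M \<subseteq> W \<longrightarrow> W = M"
    by blast
  have "y \<in> K_span M" if y: "y \<in> carrier R" for y
  proof (rule ccontr)
    assume "y \<notin> K_span M"
    then have "insert y M = M" using max M K_independent_insert[OF M(2) y] by auto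
    then show False using \<open>y \<notin> K_span M\<close> in_K_span M(2) K_independent_def by auto
  qed
  then show ?thesis using M by auto
qed

end

locale cring_K_basis = cring_subfield +
  fixes B
  assumes one_in_basis: "\<one> \<in> B" and basis_independent: "K_independent B"
    and basis_spans: "carrier R \<subseteq> K_span B"
begin

lemma basis_subset: "B \<subseteq> carrier R"
  using basis_independent K_independent_def by auto

definition support :: "('a \<Rightarrow> 'a) \<Rightarrow> 'a set" where
  "support c = {x. c x \<noteq> \<zero>}"

lemma not_in_support: "x \<notin> support u \<Longrightarrow> u x = \<zero>"
  by (simp add: support_def)

definition is_coords :: "'a \<Rightarrow> ('a \<Rightarrow> 'a) \<Rightarrow> bool" where
  "is_coords y c \<longleftrightarrow> (\<forall>x. c x \<in> K) \<and> (\<forall>x. x \<notin> B \<longrightarrow> c x = \<zero>) \<and> finite (support c) \<and>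
     y = (\<Oplus>x\<in>support c. c x \<otimes> x)"

definition coord :: "'a \<Rightarrow> 'a \<Rightarrow> 'a" where
  "coord y = (THE c. is_coords y c)"

lemma finsum_support:
  assumes "\<forall>x. c x \<in> carrier R" "finite G" "support c \<subseteq> G" "G \<subseteq> carrier R"
  shows "(\<Oplus>x\<in>G. c x \<otimes> x) = (\<Oplus>x\<in>support c. c x \<otimes> x)"
  using assms by (intro add.finprod_mono_neutral_cong_right) (auto simp: support_def)

lemma is_coords_unique:
  assumes c: "is_coords y c" and d: "is_coords y d"
  shows "c = d"
proof -
  let ?G = "support c \<union> support d"
  have G: "finite ?G" "?G \<subseteq> B" using c d unfolding is_coords_def support_def by auto
  have GR: "?G \<subseteq> carrier R" using G basis_subset by auto
  have cR: "\<And>x. c x \<in> carrier R" "\<And>x. d x \<in> carrier R"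
    using c d subfield_subset unfolding is_coords_def by auto
  have yc: "y = (\<Oplus>x\<in>?G. c x \<otimes> x)" and yd: "y = (\<Oplus>x\<in>?G. d x \<otimes> x)"
    using c d finsum_support[of c ?G] finsum_support[of d ?G] G GR cR
    unfolding is_coords_def by auto
  define e where "e x = c x \<ominus> d x" for x
  have eR: "\<And>x. e x \<in> carrier R" using cR unfolding e_def by auto
  have yR: "y \<in> carrier R" using yc GR cR by (auto intro!: finsum_closed)
  have "(\<Oplus>x\<in>?G. e x \<otimes> x) \<oplus> y = (\<Oplus>x\<in>?G. e x \<otimes> x \<oplus> d x \<otimes> x)"
    unfolding yd using G GR eR cR by (subst finsum_addf) auto
  also have "\<dots> = y"
  proof (unfold yc, intro finsum_cong')
    fix x assume "x \<in> ?G"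
    then have "x \<in> carrier R" using GR by blast
    then show "e x \<otimes> x \<oplus> d x \<otimes> x = c x \<otimes> x"
      using cR[of x] unfolding e_def by algebra
  qed (use GR eR cR in auto)
  finally have "(\<Oplus>x\<in>?G. e x \<otimes> x) = \<zero>"
    using yR GR eR by (subst (asm) add.r_cancel_one) (auto intro!: finsum_closed)
  moreover have "e \<in> ?G \<rightarrow> K" using c d unfolding is_coords_def e_def minus_eq
    by (auto intro!: subfield_closed)
  ultimately have "\<forall>x\<in>?G. e x = \<zero>" using basis_independent G unfolding K_independent_def by blast
  then have "c x = d x" for x
    using cR[of x] by (cases "x \<in> ?G") (force simp: e_def, auto simp: support_def)
  then show ?thesis by blast
qed

lemma is_coordsI:
  assumes "\<forall>x. c x \<in> K" "\<forall>x. x \<notin> B \<longrightarrow> c x = \<zero>" "finite G" "G \<subseteq> B" "support c \<subseteq> G"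
    "y = (\<Oplus>x\<in>G. c x \<otimes> x)"
  shows "is_coords y c"
proof -
  have "finite (support c)" by (rule finite_subset[OF assms(5) assms(3)])
  moreover have "y = (\<Oplus>x\<in>support c. c x \<otimes> x)"
    using assms finsum_support[of c G] basis_subset subfield_subset by auto
  ultimately show ?thesis using assms unfolding is_coords_def by auto
qed

lemma exists_coords:
  assumes "y \<in> carrier R"
  shows "\<exists>c. is_coords y c"
proof -
  obtain F c where F: "finite F" "F \<subseteq> B" "c \<in> F \<rightarrow> K" "y = (\<Oplus>x\<in>F. c x \<otimes> x)"
    using basis_spans assms unfolding K_span_def by blast
  define c' where "c' x = (if x \<in> F then c x else \<zero>)" for x
  have "y = (\<Oplus>x\<in>F. c' x \<otimes> x)"
    using F basis_subset subfield_subset unfolding c'_def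
    by (auto intro!: finsum_cong' simp: Pi_def)
  then have "is_coords y c'" using F
    by (intro is_coordsI[of c' F]) (auto simp: c'_def support_def subfield_closed)
  then show ?thesis by blast
qed

lemma coord_is_coords:
  assumes "y \<in> carrier R"
  shows "is_coords y (coord y)"
proof -
  obtain c where c: "is_coords y c" using exists_coords[OF assms] by blast
  show ?thesis
    unfolding coord_def by (rule theI[of "is_coords y" c]) (use c is_coords_unique in auto)
qed

lemma coord_eqI: "is_coords y c \<Longrightarrow> coord y = c"
  unfolding coord_def using is_coords_unique by blast

lemma coord_in_subfield: "y \<in> carrier R \<Longrightarrow> coord y x \<in> K"
  using coord_is_coords is_coords_def by blast

lemma coord_closed: "y \<in> carrier R \<Longrightarrow> coord y x \<in> carrier R"
  using coord_in_subfield subfield_subset by blast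

lemma coord_outside_basis: "y \<in> carrier R \<Longrightarrow> x \<notin> B \<Longrightarrow> coord y x = \<zero>"
  using coord_is_coords is_coords_def by blast

lemma finite_support_coord: "y \<in> carrier R \<Longrightarrow> finite (support (coord y))"
  using coord_is_coords is_coords_def by blast

lemma support_coord_subset: "y \<in> carrier R \<Longrightarrow> support (coord y) \<subseteq> B"
  using coord_outside_basis by (auto simp: support_def)

lemma coord_expansion:
  assumes "y \<in> carrier R" "finite G" "support (coord y) \<subseteq> G" "G \<subseteq> carrier R"
  shows "(\<Oplus>x\<in>G. coord y x \<otimes> x) = y"
  using finsum_support[of "coord y" G] coord_is_coords[of y] assms coord_closed
  unfolding is_coords_def by auto

lemma coord_add:
  assumes "y \<in> carrier R" "z \<in> carrier R"
  shows "coord (y \<oplus> z) = (\<lambda>x. coord y x \<oplus> coord z x)"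
proof (rule coord_eqI, rule is_coordsI)
  let ?G = "support (coord y) \<union> support (coord z)"
  show G: "finite ?G" "?G \<subseteq> B"
    using assms finite_support_coord support_coord_subset by auto
  show "\<forall>x. coord y x \<oplus> coord z x \<in> K" using assms coord_in_subfield subfield_closed by auto
  show "\<forall>x. x \<notin> B \<longrightarrow> coord y x \<oplus> coord z x = \<zero>" using assms coord_outside_basis by auto
  show "support (\<lambda>x. coord y x \<oplus> coord z x) \<subseteq> ?G" by (auto simp: support_def)
  have GR: "?G \<subseteq> carrier R" using G basis_subset by auto
  have "y \<oplus> z = (\<Oplus>x\<in>?G. coord y x \<otimes> x) \<oplus> (\<Oplus>x\<in>?G. coord z x \<otimes> x)"
    using coord_expansion[of y ?G] coord_expansion[of z ?G] assms G GR by simp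
  also have "\<dots> = (\<Oplus>x\<in>?G. (coord y x \<oplus> coord z x) \<otimes> x)"
    using GR assms coord_closed G
    by (subst finsum_addf[symmetric]) (auto intro!: finsum_cong' simp: l_distr)
  finally show "y \<oplus> z = (\<Oplus>x\<in>?G. (coord y x \<oplus> coord z x) \<otimes> x)" .
qed

lemma coord_smult:
  assumes k: "k \<in> K" and y: "y \<in> carrier R"
  shows "coord (k \<otimes> y) = (\<lambda>x. k \<otimes> coord y x)"
proof (rule coord_eqI, rule is_coordsI)
  let ?G = "support (coord y)"
  have kR: "k \<in> carrier R" using k subfield_elem_carrier by blast
  show G: "finite ?G" "?G \<subseteq> B" using y finite_support_coord support_coord_subset by auto
  show "\<forall>x. k \<otimes> coord y x \<in> K" using k y coord_in_subfield subfield_closed by blast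
  show "\<forall>x. x \<notin> B \<longrightarrow> k \<otimes> coord y x = \<zero>" using y coord_outside_basis kR by simp
  show "support (\<lambda>x. k \<otimes> coord y x) \<subseteq> ?G" using kR by (auto simp: support_def)
  have GR: "?G \<subseteq> carrier R" using G basis_subset by blast
  have "k \<otimes> y = k \<otimes> (\<Oplus>x\<in>?G. coord y x \<otimes> x)"
    using coord_expansion[OF y G(1) _ GR] by simp
  also have "\<dots> = (\<Oplus>x\<in>?G. (k \<otimes> coord y x) \<otimes> x)"
    using GR y coord_closed G(1) kR
    by (subst finsum_rdistr) (auto intro!: finsum_cong' simp: m_assoc)
  finally show "k \<otimes> y = (\<Oplus>x\<in>?G. (k \<otimes> coord y x) \<otimes> x)" .
qed

lemma coord_basis_elem:
  assumes "b \<in> B"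
  shows "coord b = (\<lambda>x. if x = b then \<one> else \<zero>)"
proof (rule coord_eqI, rule is_coordsI[where G="{b}"])
  show "b = (\<Oplus>x\<in>{b}. (if x = b then \<one> else \<zero>) \<otimes> x)" using assms basis_subset by auto
qed (use assms subfield_closed in \<open>auto simp: support_def\<close>)

lemma coord_subfield_elem:
  assumes "k \<in> K"
  shows "coord k = (\<lambda>x. if x = \<one> then k else \<zero>)"
proof -
  have "coord k = coord (k \<otimes> \<one>)" using assms subfield_subset by auto
  also have "\<dots> = (\<lambda>x. k \<otimes> coord \<one> x)" using coord_smult[OF assms] by simp
  finally show ?thesis using assms subfield_subset coord_basis_elem[OF one_in_basis]
    by (auto simp: fun_eq_iff)
qed

end

section \<open>The tensor square over a subfield\<close>

context cring_K_basis
begin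

definition K_linear :: "('a \<Rightarrow> 'a) \<Rightarrow> bool" where
  "K_linear f \<longleftrightarrow> (\<forall>x\<in>carrier R. f x \<in> carrier R)
     \<and> (\<forall>x\<in>carrier R. \<forall>y\<in>carrier R. f (x \<oplus> y) = f x \<oplus> f y)
     \<and> (\<forall>k\<in>K. \<forall>x\<in>carrier R. f (k \<otimes> x) = k \<otimes> f x)"

lemma K_linear_closed: "K_linear f \<Longrightarrow> x \<in> carrier R \<Longrightarrow> f x \<in> carrier R"
  by (simp add: K_linear_def)

lemma K_linear_add: "K_linear f \<Longrightarrow> x \<in> carrier R \<Longrightarrow> y \<in> carrier R \<Longrightarrow> f (x \<oplus> y) = f x \<oplus> f y"
  by (simp add: K_linear_def)

lemma K_linear_smult: "K_linear f \<Longrightarrow> k \<in> K \<Longrightarrow> x \<in> carrier R \<Longrightarrow> f (k \<otimes> x) = k \<otimes> f x"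
  by (simp add: K_linear_def)

lemma K_linear_coord: "K_linear (\<lambda>y. coord y d)"
  unfolding K_linear_def by (auto simp: coord_closed coord_add coord_smult)

lemma K_linear_lin_comb:
  assumes f: "K_linear f" and "finite I" "\<And>i. i \<in> I \<Longrightarrow> k i \<in> K" "\<And>i. i \<in> I \<Longrightarrow> g i \<in> carrier R"
  shows "f (\<Oplus>i\<in>I. k i \<otimes> g i) = (\<Oplus>i\<in>I. k i \<otimes> f (g i))"
  using assms(2-)
proof (induction I rule: finite_induct)
  case empty
  have "f (\<zero> \<otimes> \<zero>) = \<zero> \<otimes> f \<zero>" using K_linear_smult[OF f subfield_closed(1)] by simp
  then show ?case using K_linear_closed[OF f, of \<zero>] by simp
next
  case (insert a I)
  have kR: "\<And>i. i \<in> insert a I \<Longrightarrow> k i \<in> carrier R" using insert subfield_subset by auto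
  have "f (\<Oplus>i\<in>insert a I. k i \<otimes> g i) = f (k a \<otimes> g a \<oplus> (\<Oplus>i\<in>I. k i \<otimes> g i))"
    using insert kR by (subst finsum_insert) auto
  also have "\<dots> = k a \<otimes> f (g a) \<oplus> f (\<Oplus>i\<in>I. k i \<otimes> g i)"
    using insert kR
    by (subst K_linear_add[OF f]) (auto intro!: finsum_closed simp: K_linear_smult[OF f])
  also have "\<dots> = (\<Oplus>i\<in>insert a I. k i \<otimes> f (g i))"
    using insert kR K_linear_closed[OF f] by (subst finsum_insert) auto
  finally show ?case .
qed

lemma K_linear_expand:
  assumes f: "K_linear f" and y: "y \<in> carrier R" and x: "x \<in> carrier R"
    and D: "finite D" "support (coord y) \<subseteq> D" "D \<subseteq> carrier R"
  shows "f (y \<otimes> x) = (\<Oplus>d\<in>D. coord y d \<otimes> f (d \<otimes> x))"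
proof -
  have "y \<otimes> x = (\<Oplus>d\<in>D. coord y d \<otimes> d) \<otimes> x" using coord_expansion[OF y D] by simp
  also have "\<dots> = (\<Oplus>d\<in>D. coord y d \<otimes> (d \<otimes> x))"
    using D x y coord_closed by (subst finsum_ldistr) (auto intro!: finsum_cong' simp: m_assoc)
  finally show ?thesis
    using K_linear_lin_comb[OF f D(1), of "coord y" "\<lambda>d. d \<otimes> x"] D x y coord_in_subfield by auto
qed

text \<open>A finitely supported \<open>u\<close> with support in the basis \<open>B\<close> stands for the element
  \<open>\<Sum>\<^sub>b u(b) \<otimes> b\<close> of \<open>R \<otimes>\<^sub>K R\<close>, the free \<open>R\<close>-module on \<open>B\<close>. In \<open>tensor_mult\<close> the
  product \<open>(a \<otimes> b)(a' \<otimes> b') = a a' \<otimes> b b'\<close> is brought back to this form by expanding \<open>b b'\<close>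
  in the basis.\<close>

definition tensors :: "('a \<Rightarrow> 'a) set" where
  "tensors = {u. (\<forall>x. u x \<in> carrier R) \<and> (\<forall>x. x \<notin> B \<longrightarrow> u x = \<zero>) \<and> finite (support u)}"

definition tensor_mult :: "('a \<Rightarrow> 'a) \<Rightarrow> ('a \<Rightarrow> 'a) \<Rightarrow> 'a \<Rightarrow> 'a" where
  "tensor_mult u v = (\<lambda>d. \<Oplus>b\<in>support u. \<Oplus>c\<in>support v. u b \<otimes> v c \<otimes> coord (b \<otimes> c) d)"

definition tensor_one :: "'a \<Rightarrow> 'a" where
  "tensor_one = (\<lambda>x. if x = \<one> then \<one> else \<zero>)"

definition tensor_ring :: "('a \<Rightarrow> 'a) ring" where
  "tensor_ring = \<lparr>carrier = tensors, monoid.mult = tensor_mult, one = tensor_one,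
     ring.zero = (\<lambda>x. \<zero>), ring.add = (\<lambda>u v x. u x \<oplus> v x)\<rparr>"

lemma tensor_ring_simps [simp]:
  "carrier tensor_ring = tensors" "monoid.mult tensor_ring = tensor_mult"
  "one tensor_ring = tensor_one" "ring.zero tensor_ring = (\<lambda>x. \<zero>)"
  "ring.add tensor_ring = (\<lambda>u v x. u x \<oplus> v x)"
  by (simp_all add: tensor_ring_def)

lemma tensorsD:
  assumes "u \<in> tensors"
  shows "\<And>x. u x \<in> carrier R" "\<And>x. x \<notin> B \<Longrightarrow> u x = \<zero>" "finite (support u)"
    "support u \<subseteq> B" "\<And>x. x \<in> support u \<Longrightarrow> x \<in> carrier R"
  using assms basis_subset unfolding tensors_def support_def by auto

lemma tensorsI:
  "(\<And>x. u x \<in> carrier R) \<Longrightarrow> (\<And>x. x \<notin> B \<Longrightarrow> u x = \<zero>) \<Longrightarrow> support u \<subseteq> F \<Longrightarrow> finite F \<Longrightarrow>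
    u \<in> tensors"
  unfolding tensors_def by (auto intro: finite_subset)

lemma coord_in_tensors: "y \<in> carrier R \<Longrightarrow> coord y \<in> tensors"
  unfolding tensors_def using coord_closed coord_outside_basis finite_support_coord by auto

lemma zero_in_tensors: "(\<lambda>x. \<zero>) \<in> tensors"
  unfolding tensors_def support_def by auto

lemma add_in_tensors:
  assumes "u \<in> tensors" "v \<in> tensors"
  shows "(\<lambda>x. u x \<oplus> v x) \<in> tensors"
  using tensorsD[OF assms(1)] tensorsD[OF assms(2)]
  by (intro tensorsI[where F = "support u \<union> support v"]) (auto simp: support_def)

lemma neg_in_tensors: "u \<in> tensors \<Longrightarrow> (\<lambda>x. \<ominus> u x) \<in> tensors"
  using tensorsD[of u] by (intro tensorsI[where F = "support u"]) (auto simp: support_def)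

lemma tensor_one_in_tensors: "tensor_one \<in> tensors"
  using one_in_basis by (intro tensorsI[where F = "{\<one>}"]) (auto simp: tensor_one_def support_def)

lemma tensor_mult_over:
  assumes u: "u \<in> tensors" and v: "v \<in> tensors"
    and F: "finite F" "support u \<subseteq> F" "F \<subseteq> carrier R"
    and G: "finite G" "support v \<subseteq> G" "G \<subseteq> carrier R"
  shows "tensor_mult u v d = (\<Oplus>b\<in>F. \<Oplus>c\<in>G. u b \<otimes> v c \<otimes> coord (b \<otimes> c) d)"
proof -
  note u' = tensorsD[OF u] and v' = tensorsD[OF v]
  have inner: "(\<Oplus>c\<in>G. u b \<otimes> v c \<otimes> coord (b \<otimes> c) d)
      = (\<Oplus>c\<in>support v. u b \<otimes> v c \<otimes> coord (b \<otimes> c) d)" if "b \<in> carrier R" for b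
    using G that u' v' coord_closed
    by (intro add.finprod_mono_neutral_cong_right) (auto simp: support_def)
  have "(\<Oplus>b\<in>F. \<Oplus>c\<in>G. u b \<otimes> v c \<otimes> coord (b \<otimes> c) d)
      = (\<Oplus>b\<in>F. \<Oplus>c\<in>support v. u b \<otimes> v c \<otimes> coord (b \<otimes> c) d)"
    using inner F u' v' coord_closed by (rule_tac finsum_cong') (auto intro!: finsum_closed)
  also have "\<dots> = (\<Oplus>b\<in>support u. \<Oplus>c\<in>support v. u b \<otimes> v c \<otimes> coord (b \<otimes> c) d)"
  proof (rule add.finprod_mono_neutral_cong_right)
    show "(\<Oplus>c\<in>support v. u b \<otimes> v c \<otimes> coord (b \<otimes> c) d) = \<zero>" if "b \<in> F - support u" for b
      using that F v' coord_closed by (intro finsum_zero_eqI) (auto simp: support_def)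
  qed (use F u' v' coord_closed in \<open>auto intro!: finsum_closed\<close>)
  finally show ?thesis unfolding tensor_mult_def by simp
qed

definition mult_support :: "('a \<Rightarrow> 'a) \<Rightarrow> ('a \<Rightarrow> 'a) \<Rightarrow> 'a set" where
  "mult_support u v = (\<Union>b\<in>support u. \<Union>c\<in>support v. support (coord (b \<otimes> c)))"

lemma mult_support_bounds:
  assumes u: "u \<in> tensors" and v: "v \<in> tensors"
  shows "finite (mult_support u v)" "mult_support u v \<subseteq> B" "mult_support u v \<subseteq> carrier R"
    "support (tensor_mult u v) \<subseteq> mult_support u v"
proof -
  note u' = tensorsD[OF u] and v' = tensorsD[OF v]
  show "finite (mult_support u v)"
    unfolding mult_support_def using u' v' finite_support_coord by simp
  show "mult_support u v \<subseteq> B"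
    unfolding mult_support_def using u' v' support_coord_subset by blast
  then show "mult_support u v \<subseteq> carrier R" using basis_subset by blast
  have "tensor_mult u v d = \<zero>" if "d \<notin> mult_support u v" for d
  proof -
    have "coord (b \<otimes> c) d = \<zero>" if "b \<in> support u" "c \<in> support v" for b c
      using that \<open>d \<notin> mult_support u v\<close> not_in_support unfolding mult_support_def by blast
    then show ?thesis unfolding tensor_mult_def using u' v' by (intro finsum_zero_eqI) auto
  qed
  then show "support (tensor_mult u v) \<subseteq> mult_support u v" by (auto simp: support_def)
qed

lemma tensor_mult_in_tensors:
  assumes u: "u \<in> tensors" and v: "v \<in> tensors"
  shows "tensor_mult u v \<in> tensors"
proof (rule tensorsI[OF _ _ mult_support_bounds(4,1)[OF u v]])
  note u' = tensorsD[OF u] and v' = tensorsD[OF v]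
  show "tensor_mult u v x \<in> carrier R" for x
    unfolding tensor_mult_def using u' v' coord_closed by (auto intro!: finsum_closed)
  show "tensor_mult u v x = \<zero>" if "x \<notin> B" for x
    unfolding tensor_mult_def using u' v' coord_outside_basis that by (intro finsum_zero_eqI) auto
qed

lemma tensor_mult_comm:
  assumes u: "u \<in> tensors" and v: "v \<in> tensors"
  shows "tensor_mult u v = tensor_mult v u"
proof
  fix d
  note u' = tensorsD[OF u] and v' = tensorsD[OF v]
  have "tensor_mult u v d = (\<Oplus>c\<in>support v. \<Oplus>b\<in>support u. u b \<otimes> v c \<otimes> coord (b \<otimes> c) d)"
    unfolding tensor_mult_def using u' v' coord_closed by (intro finsum_swap) auto
  also have "\<dots> = tensor_mult v u d"
    unfolding tensor_mult_def using u' v' coord_closed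
    by (intro finsum_cong') (auto intro!: finsum_cong' finsum_closed simp: m_comm)
  finally show "tensor_mult u v d = tensor_mult v u d" .
qed

lemma tensor_mult_one:
  assumes v: "v \<in> tensors"
  shows "tensor_mult tensor_one v = v"
proof
  fix d
  note v' = tensorsD[OF v]
  have "tensor_mult tensor_one v d
      = (\<Oplus>b\<in>{\<one>}. \<Oplus>c\<in>support v. tensor_one b \<otimes> v c \<otimes> coord (b \<otimes> c) d)"
    using one_in_basis basis_subset v'
    by (intro tensor_mult_over[OF tensor_one_in_tensors v]) (auto simp: support_def tensor_one_def)
  also have "\<dots> = (\<Oplus>c\<in>support v. v c \<otimes> coord c d)"
    using v' coord_closed by (simp add: tensor_one_def finsum_closed, intro finsum_cong') auto
  also have "\<dots> = (\<Oplus>c\<in>support v. if d = c then v c else \<zero>)"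
    using v' by (intro finsum_cong') (auto simp: coord_basis_elem subset_iff)
  also have "\<dots> = v d"
    using v' by (cases "d \<in> support v")
      (auto simp: not_in_support add.finprod_singleton intro: finsum_zero_eqI)
  finally show "tensor_mult tensor_one v d = v d" .
qed

lemma tensor_mult_add_distrib:
  assumes u: "u \<in> tensors" and v: "v \<in> tensors" and w: "w \<in> tensors"
  shows "tensor_mult (\<lambda>x. u x \<oplus> v x) w = (\<lambda>d. tensor_mult u w d \<oplus> tensor_mult v w d)"
proof
  fix d
  let ?F = "support u \<union> support v" and ?g = "\<lambda>b. \<Oplus>c\<in>support w. w c \<otimes> coord (b \<otimes> c) d"
  note u' = tensorsD[OF u] and v' = tensorsD[OF v] and w' = tensorsD[OF w]
  have F: "finite ?F" "?F \<subseteq> carrier R" using u' v' by auto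
  have g: "?g b \<in> carrier R" if "b \<in> carrier R" for b
    using that w' coord_closed by (auto intro!: finsum_closed)
  have expand: "tensor_mult x w d = (\<Oplus>b\<in>?F. x b \<otimes> ?g b)"
    if "x \<in> tensors" "support x \<subseteq> ?F" for x
    using tensor_mult_over[OF that(1) w F(1) that(2) F(2) w'(3) subset_refl]
      tensorsD[OF that(1)] w' F coord_closed
    by (auto intro!: finsum_cong' simp: finsum_rdistr m_assoc subset_iff)
  have "tensor_mult (\<lambda>x. u x \<oplus> v x) w d = (\<Oplus>b\<in>?F. (u b \<oplus> v b) \<otimes> ?g b)"
    using add_in_tensors[OF u v] by (intro expand) (auto simp: support_def)
  also have "\<dots> = (\<Oplus>b\<in>?F. u b \<otimes> ?g b \<oplus> v b \<otimes> ?g b)"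
    using F u' v' g by (intro finsum_cong') (auto simp: l_distr)
  also have "\<dots> = (\<Oplus>b\<in>?F. u b \<otimes> ?g b) \<oplus> (\<Oplus>b\<in>?F. v b \<otimes> ?g b)"
    using F u' v' g by (intro finsum_addf) auto
  also have "\<dots> = tensor_mult u w d \<oplus> tensor_mult v w d"
    using expand[OF u] expand[OF v] by auto
  finally show "tensor_mult (\<lambda>x. u x \<oplus> v x) w d = tensor_mult u w d \<oplus> tensor_mult v w d" .
qed

text \<open>Associativity is obtained by letting \<open>a \<otimes> b\<close> act on \<open>K\<close>-linear maps via
  \<open>f \<mapsto> (x \<mapsto> a f(b x))\<close>: this action is multiplicative and faithful.\<close>

definition tensor_action :: "('a \<Rightarrow> 'a) \<Rightarrow> ('a \<Rightarrow> 'a) \<Rightarrow> 'a \<Rightarrow> 'a" where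
  "tensor_action u f x = (\<Oplus>b\<in>support u. u b \<otimes> f (b \<otimes> x))"

lemma tensor_action_over:
  assumes u: "u \<in> tensors" and f: "K_linear f" and x: "x \<in> carrier R"
    and F: "finite F" "support u \<subseteq> F" "F \<subseteq> carrier R"
  shows "tensor_action u f x = (\<Oplus>b\<in>F. u b \<otimes> f (b \<otimes> x))"
  unfolding tensor_action_def using F tensorsD[OF u] x K_linear_closed[OF f]
  by (intro add.finprod_mono_neutral_cong_right[symmetric]) (auto simp: support_def subset_iff)

lemma tensor_action_cong:
  assumes "\<And>y. y \<in> carrier R \<Longrightarrow> f y = g y" "K_linear g" "u \<in> tensors" "x \<in> carrier R"
  shows "tensor_action u f x = tensor_action u g x"
  unfolding tensor_action_def using assms tensorsD[OF assms(3)] K_linear_closed[OF assms(2)]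
  by (intro finsum_cong') auto

lemma K_linear_tensor_action:
  assumes u: "u \<in> tensors" and f: "K_linear f"
  shows "K_linear (tensor_action u f)"
  unfolding K_linear_def
proof (intro conjI ballI)
  note u' = tensorsD[OF u] and fR = K_linear_closed[OF f]
  fix x assume x: "x \<in> carrier R"
  then show "tensor_action u f x \<in> carrier R"
    unfolding tensor_action_def using u' fR by (auto intro!: finsum_closed)
  fix y assume y: "y \<in> carrier R"
  have "tensor_action u f (x \<oplus> y) = (\<Oplus>b\<in>support u. u b \<otimes> f (b \<otimes> x) \<oplus> u b \<otimes> f (b \<otimes> y))"
    unfolding tensor_action_def using x y u' fR
    by (intro finsum_cong') (auto simp: r_distr K_linear_add[OF f])
  also have "\<dots> = tensor_action u f x \<oplus> tensor_action u f y"
    unfolding tensor_action_def using x y u' fR by (subst finsum_addf) auto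
  finally show "tensor_action u f (x \<oplus> y) = tensor_action u f x \<oplus> tensor_action u f y" .
next
  note u' = tensorsD[OF u] and fR = K_linear_closed[OF f]
  fix k x assume k: "k \<in> K" and x: "x \<in> carrier R"
  have kR: "k \<in> carrier R" using k subfield_subset by auto
  have "u b \<otimes> f (b \<otimes> (k \<otimes> x)) = k \<otimes> (u b \<otimes> f (b \<otimes> x))" if "b \<in> support u" for b
  proof -
    have bR: "b \<in> carrier R" using that u' by blast
    then have "f (b \<otimes> (k \<otimes> x)) = k \<otimes> f (b \<otimes> x)"
      using m_lcomm[OF bR kR x] K_linear_smult[OF f k, of "b \<otimes> x"] x by simp
    then show ?thesis using bR kR x u' fR by (simp add: m_lcomm)
  qed
  then have "tensor_action u f (k \<otimes> x) = (\<Oplus>b\<in>support u. k \<otimes> (u b \<otimes> f (b \<otimes> x)))"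
    unfolding tensor_action_def using u' kR x fR by (intro finsum_cong') auto
  also have "\<dots> = k \<otimes> tensor_action u f x"
    unfolding tensor_action_def using x kR u' fR by (subst finsum_rdistr) auto
  finally show "tensor_action u f (k \<otimes> x) = k \<otimes> tensor_action u f x" .
qed

lemma tensor_action_mult:
  assumes u: "u \<in> tensors" and v: "v \<in> tensors" and f: "K_linear f" and x: "x \<in> carrier R"
  shows "tensor_action u (tensor_action v f) x = tensor_action (tensor_mult u v) f x"
proof -
  let ?U = "support u" and ?V = "support v" and ?D = "mult_support u v"
  let ?t = "\<lambda>b c d. u b \<otimes> v c \<otimes> coord (b \<otimes> c) d \<otimes> f (d \<otimes> x)"
  note u' = tensorsD[OF u] and v' = tensorsD[OF v] and fR = K_linear_closed[OF f]
  note D = mult_support_bounds[OF u v]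
  have t: "?t b c d \<in> carrier R" if "b \<in> ?U" "c \<in> ?V" "d \<in> ?D" for b c d
    using that u' v' D x fR coord_closed by auto
  have inner: "u b \<otimes> (\<Oplus>c\<in>?V. v c \<otimes> f (c \<otimes> (b \<otimes> x))) = (\<Oplus>c\<in>?V. \<Oplus>d\<in>?D. ?t b c d)"
    if b: "b \<in> ?U" for b
  proof -
    have expand: "f (c \<otimes> (b \<otimes> x)) = (\<Oplus>d\<in>?D. coord (b \<otimes> c) d \<otimes> f (d \<otimes> x))"
      if c: "c \<in> ?V" for c
      using K_linear_expand[OF f _ x D(1) _ D(3), of "b \<otimes> c"] b c u' v' x
      unfolding mult_support_def by (auto simp: m_ac)
    then have "u b \<otimes> (v c \<otimes> f (c \<otimes> (b \<otimes> x))) = (\<Oplus>d\<in>?D. ?t b c d)" if c: "c \<in> ?V" for c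
      unfolding expand[OF c] using b c D u' v' x fR coord_closed by (intro mult_mult_finsum) auto
    then show ?thesis
      using b D u' v' x fR coord_closed
      by (subst finsum_rdistr) (auto intro!: finsum_cong' finsum_closed)
  qed
  have "tensor_action u (tensor_action v f) x = (\<Oplus>b\<in>?U. \<Oplus>c\<in>?V. \<Oplus>d\<in>?D. ?t b c d)"
    unfolding tensor_action_def using inner u' v' D x fR coord_closed
    by (intro finsum_cong') (auto intro!: finsum_closed)
  also have "\<dots> = (\<Oplus>d\<in>?D. \<Oplus>b\<in>?U. \<Oplus>c\<in>?V. ?t b c d)"
    using u' v' D t by (intro finsum_rotate3) auto
  also have "\<dots> = (\<Oplus>d\<in>?D. tensor_mult u v d \<otimes> f (d \<otimes> x))"
    unfolding tensor_mult_def using u' v' D x fR coord_closed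
    by (intro finsum_cong') (auto simp: finsum2_ldistr intro!: finsum_closed)
  also have "\<dots> = tensor_action (tensor_mult u v) f x"
    using tensor_action_over[OF tensor_mult_in_tensors[OF u v] f x D(1) D(4) D(3)] by simp
  finally show ?thesis .
qed

lemma tensor_action_coord_one:
  assumes u: "u \<in> tensors"
  shows "tensor_action u (\<lambda>y. coord y c) \<one> = u c"
proof -
  note u' = tensorsD[OF u]
  have "tensor_action u (\<lambda>y. coord y c) \<one> = (\<Oplus>b\<in>support u. if c = b then u b else \<zero>)"
    unfolding tensor_action_def using u'
    by (intro finsum_cong') (auto simp: coord_basis_elem subset_iff)
  also have "\<dots> = u c"
    using u' by (cases "c \<in> support u")
      (auto simp: not_in_support add.finprod_singleton intro: finsum_zero_eqI)
  finally show ?thesis .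
qed

lemma tensor_action_inj:
  assumes u: "u \<in> tensors" and v: "v \<in> tensors"
    and eq: "\<And>f x. K_linear f \<Longrightarrow> x \<in> carrier R \<Longrightarrow> tensor_action u f x = tensor_action v f x"
  shows "u = v"
proof
  fix c
  show "u c = v c"
    using eq[OF K_linear_coord, of \<one> c] tensor_action_coord_one[OF u] tensor_action_coord_one[OF v]
    by simp
qed

lemma tensor_mult_assoc:
  assumes u: "u \<in> tensors" and v: "v \<in> tensors" and w: "w \<in> tensors"
  shows "tensor_mult (tensor_mult u v) w = tensor_mult u (tensor_mult v w)"
proof (rule tensor_action_inj)
  note uv = tensor_mult_in_tensors[OF u v] and vw = tensor_mult_in_tensors[OF v w]
  show "tensor_mult (tensor_mult u v) w \<in> tensors" "tensor_mult u (tensor_mult v w) \<in> tensors"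
    using tensor_mult_in_tensors u w uv vw by auto
  fix f x assume f: "K_linear f" and x: "x \<in> carrier R"
  have "tensor_action (tensor_mult (tensor_mult u v) w) f x
      = tensor_action u (tensor_action v (tensor_action w f)) x"
    using tensor_action_mult[OF uv w f x]
      tensor_action_mult[OF u v K_linear_tensor_action[OF w f] x]
    by simp
  also have "\<dots> = tensor_action u (tensor_action (tensor_mult v w) f) x"
    using tensor_action_mult[OF v w f] K_linear_tensor_action[OF vw f] u x
    by (intro tensor_action_cong) auto
  also have "\<dots> = tensor_action (tensor_mult u (tensor_mult v w)) f x"
    using tensor_action_mult[OF u vw f x] by simp
  finally show "tensor_action (tensor_mult (tensor_mult u v) w) f x
      = tensor_action (tensor_mult u (tensor_mult v w)) f x" .
qed

lemma cring_tensor_ring: "cring tensor_ring"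
proof (rule cringI)
  show "abelian_group tensor_ring"
    by (rule abelian_groupI)
      (auto simp: fun_eq_iff tensorsD a_ac zero_in_tensors add_in_tensors
        intro!: bexI[of _ "\<lambda>a. \<ominus> _ a"] neg_in_tensors l_neg r_neg)
  show "comm_monoid tensor_ring"
    by (rule comm_monoidI)
      (auto simp: tensor_mult_in_tensors tensor_one_in_tensors tensor_mult_assoc tensor_mult_one
        intro: tensor_mult_comm)
qed (simp add: tensor_mult_add_distrib)

text \<open>In this encoding \<open>tensor_left y\<close> is \<open>y \<otimes> 1\<close> and \<open>coord y\<close> is \<open>1 \<otimes> y\<close>.\<close>

definition tensor_left :: "'a \<Rightarrow> 'a \<Rightarrow> 'a" where
  "tensor_left y = (\<lambda>x. if x = \<one> then y else \<zero>)"

lemma tensor_left_in_tensors: "y \<in> carrier R \<Longrightarrow> tensor_left y \<in> tensors"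
  using one_in_basis by (intro tensorsI[where F = "{\<one>}"]) (auto simp: tensor_left_def support_def)

lemma tensor_left_hom: "tensor_left \<in> ring_hom R tensor_ring"
proof (rule ring_hom_memI)
  show "tensor_left x \<in> carrier tensor_ring" if "x \<in> carrier R" for x
    using tensor_left_in_tensors[OF that] by simp
next
  fix y z assume y: "y \<in> carrier R" and z: "z \<in> carrier R"
  have "support (tensor_left a) \<subseteq> {\<one>}" for a by (auto simp: support_def tensor_left_def)
  then have "tensor_mult (tensor_left y) (tensor_left z) d
      = (\<Oplus>b\<in>{\<one>}. \<Oplus>c\<in>{\<one>}. tensor_left y b \<otimes> tensor_left z c \<otimes> coord (b \<otimes> c) d)" for d
    using y z one_in_basis basis_subset
    by (intro tensor_mult_over[OF tensor_left_in_tensors tensor_left_in_tensors]) auto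
  then have "tensor_mult (tensor_left y) (tensor_left z) d = y \<otimes> z \<otimes> coord \<one> d" for d
    using y z coord_closed by (simp add: tensor_left_def)
  then show "tensor_left (y \<otimes> z) = tensor_left y \<otimes>\<^bsub>tensor_ring\<^esub> tensor_left z"
    using y z by (auto simp: fun_eq_iff coord_basis_elem[OF one_in_basis] tensor_left_def)
qed (auto simp: tensor_left_def tensor_one_def fun_eq_iff)

lemma coord_mult:
  assumes y: "y \<in> carrier R" and z: "z \<in> carrier R"
  shows "coord (y \<otimes> z) = tensor_mult (coord y) (coord z)"
proof
  fix d
  let ?Y = "support (coord y)" and ?Z = "support (coord z)"
  have Y: "finite ?Y" "?Y \<subseteq> carrier R" and Z: "finite ?Z" "?Z \<subseteq> carrier R"
    using finite_support_coord support_coord_subset basis_subset y z by auto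
  have YZ: "\<And>b. b \<in> ?Y \<Longrightarrow> b \<in> carrier R" "\<And>c. c \<in> ?Z \<Longrightarrow> c \<in> carrier R"
    using Y Z by auto
  have "coord (b \<otimes> z) d = (\<Oplus>c\<in>?Z. coord z c \<otimes> coord (c \<otimes> b) d)" if "b \<in> carrier R" for b
    using K_linear_expand[OF K_linear_coord z that Z(1) _ Z(2)] that z by (simp add: m_comm)
  then have "coord (y \<otimes> z) d = (\<Oplus>b\<in>?Y. coord y b \<otimes> (\<Oplus>c\<in>?Z. coord z c \<otimes> coord (c \<otimes> b) d))"
    using K_linear_expand[OF K_linear_coord y z Y(1) _ Y(2)] YZ y z coord_closed Z
    by (auto intro!: finsum_cong' finsum_closed)
  also have "\<dots> = tensor_mult (coord y) (coord z) d"
    unfolding tensor_mult_def using YZ Z y z coord_closed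
    by (intro finsum_cong') (auto simp: finsum_rdistr m_ac intro!: finsum_cong' finsum_closed)
  finally show "coord (y \<otimes> z) d = tensor_mult (coord y) (coord z) d" .
qed

lemma coord_hom: "coord \<in> ring_hom R tensor_ring"
  using coord_basis_elem[OF one_in_basis]
  by (intro ring_hom_memI) (auto simp: coord_in_tensors coord_mult coord_add tensor_one_def)

lemma tensor_left_eq_coord_on_subfield: "k \<in> K \<Longrightarrow> tensor_left k = coord k"
  using coord_subfield_elem by (simp add: tensor_left_def)

lemma in_subfield_if_tensor_left_eq_coord:
  assumes "s \<in> carrier R" "tensor_left s = coord s"
  shows "s \<in> K"
  using coord_in_subfield[OF assms(1), of \<one>] fun_cong[OF assms(2), of \<one>]
  by (simp add: tensor_left_def)

end

section \<open>Epimorphisms out of a subfield\<close>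

definition fun_graph :: "('a \<Rightarrow> 'b) \<Rightarrow> ('a \<times> 'b) set" where
  "fun_graph u = {(x, u x) | x. True}"

lemma inj_fun_graph: "inj fun_graph"
proof (rule injI)
  fix u v :: "'a \<Rightarrow> 'b" assume "fun_graph u = fun_graph v"
  then show "u = v" unfolding fun_graph_def by (auto simp: fun_eq_iff)
qed

definition image_ring :: "('a \<Rightarrow> 'b) \<Rightarrow> ('a, 'm) ring_scheme \<Rightarrow> 'b ring" where
  "image_ring f A = \<lparr>carrier = f ` carrier A,
     monoid.mult = (\<lambda>U V. f (the_inv f U \<otimes>\<^bsub>A\<^esub> the_inv f V)), one = f \<one>\<^bsub>A\<^esub>,
     ring.zero = f \<zero>\<^bsub>A\<^esub>, ring.add = (\<lambda>U V. f (the_inv f U \<oplus>\<^bsub>A\<^esub> the_inv f V))\<rparr>"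

lemma ring_iso_image_ring:
  assumes "inj f"
  shows "f \<in> ring_iso A (image_ring f A)"
  unfolding ring_iso_def image_ring_def
  using assms by (auto intro!: ring_hom_memI simp: bij_betw_def inj_on_def the_inv_f_f)

lemma cring_image_ring:
  assumes "cring A" "inj f"
  shows "cring (image_ring f A)"
proof -
  have "cring ((image_ring f A)\<lparr>zero := f \<zero>\<^bsub>A\<^esub>\<rparr>)"
    using cring.ring_iso_imp_img_cring[OF assms(1) ring_iso_image_ring[OF assms(2)]] .
  then show ?thesis by (simp add: image_ring_def)
qed

context cring_subfield
begin

theorem carrier_eq_subfield_if_epi:
  assumes epi: "\<And>(T :: ('a \<times> 'a) set ring) g h. cring T \<Longrightarrow> g \<in> ring_hom R T \<Longrightarrow>
      h \<in> ring_hom R T \<Longrightarrow> (\<forall>k\<in>K. g k = h k) \<Longrightarrow> \<forall>s\<in>carrier R. g s = h s"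
  shows "carrier R = K"
proof
  obtain B where B: "\<one> \<in> B" "K_independent B" "carrier R \<subseteq> K_span B"
    using exists_K_basis by blast
  interpret cring_K_basis K R B
    by (intro cring_K_basis.intro cring_subfield_axioms cring_K_basis_axioms.intro B)
  \<comment> \<open>The tensor ring lives on functions; its copy on their graphs has the carrier type
    over which the hypothesis quantifies.\<close>
  let ?T = "image_ring fun_graph tensor_ring"
  have graph_hom: "fun_graph \<in> ring_hom tensor_ring ?T"
    using ring_iso_image_ring[OF inj_fun_graph] unfolding ring_iso_def by blast
  have "\<forall>s\<in>carrier R. (fun_graph \<circ> tensor_left) s = (fun_graph \<circ> coord) s"
  proof (rule epi)
    show "cring ?T" by (rule cring_image_ring[OF cring_tensor_ring inj_fun_graph])
    show "fun_graph \<circ> tensor_left \<in> ring_hom R ?T"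
      by (rule ring_hom_trans[OF tensor_left_hom graph_hom])
    show "fun_graph \<circ> coord \<in> ring_hom R ?T"
      by (rule ring_hom_trans[OF coord_hom graph_hom])
    show "\<forall>k\<in>K. (fun_graph \<circ> tensor_left) k = (fun_graph \<circ> coord) k"
      using tensor_left_eq_coord_on_subfield by simp
  qed
  then show "carrier R \<subseteq> K"
    using injD[OF inj_fun_graph] in_subfield_if_tensor_left_eq_coord by (metis comp_apply subsetI)
qed (rule subfield_subset)

end

section \<open>The field of fractions of a domain\<close>

lemma Union_pairs_const:
  "(\<And>p q. p \<in> U \<Longrightarrow> q \<in> V \<Longrightarrow> f p q = C) \<Longrightarrow> u \<in> U \<Longrightarrow> v \<in> V \<Longrightarrow>
    \<Union>{f p q | p q. p \<in> U \<and> q \<in> V} = C"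
  by blast

context "domain"
begin

lemma frac_pairs_eq: "frac_pairs R = carrier R \<times> (carrier R - {\<zero>})"
  by (simp add: frac_pairs_def)

lemma frac_rel_iff: "((a, b), (c, d)) \<in> frac_rel R \<longleftrightarrow>
    (a, b) \<in> frac_pairs R \<and> (c, d) \<in> frac_pairs R \<and> a \<otimes> d = c \<otimes> b"
  by (simp add: frac_rel_def)

lemma frac_pairs_closed:
  assumes "(a, b) \<in> frac_pairs R" "(c, d) \<in> frac_pairs R"
  shows "(a \<otimes> c, b \<otimes> d) \<in> frac_pairs R" "(a \<otimes> d \<oplus> c \<otimes> b, b \<otimes> d) \<in> frac_pairs R"
  using assms integral unfolding frac_pairs_eq by auto

lemma equiv_frac_rel: "equiv (frac_pairs R) (frac_rel R)"
proof (rule equivI)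
  show "refl_on (frac_pairs R) (frac_rel R)" unfolding refl_on_def by (auto simp: frac_rel_def)
  show "sym (frac_rel R)" unfolding sym_def by (auto simp: frac_rel_def)
  show "trans (frac_rel R)"
  proof (rule transI, clarify)
    fix a b c d e f
    assume "((a, b), (c, d)) \<in> frac_rel R" "((c, d), (e, f)) \<in> frac_rel R"
    then have pairs: "(a, b) \<in> frac_pairs R" "(e, f) \<in> frac_pairs R"
      and R: "a \<in> carrier R" "b \<in> carrier R" "c \<in> carrier R" "d \<in> carrier R"
        "e \<in> carrier R" "f \<in> carrier R" and d: "d \<noteq> \<zero>"
      and eq: "a \<otimes> d = c \<otimes> b" "c \<otimes> f = e \<otimes> d"
      unfolding frac_rel_iff frac_pairs_eq by auto
    have "(a \<otimes> f) \<otimes> d = (a \<otimes> d) \<otimes> f" using R by (simp add: m_ac)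
    also have "\<dots> = (c \<otimes> f) \<otimes> b" unfolding eq(1) using R by (simp add: m_ac)
    also have "\<dots> = (e \<otimes> b) \<otimes> d" unfolding eq(2) using R by (simp add: m_ac)
    finally have "a \<otimes> f = e \<otimes> b" using m_rcancel[OF d] R by simp
    then show "((a, b), (e, f)) \<in> frac_rel R" using pairs frac_rel_iff by blast
  qed
qed (auto simp: frac_rel_def)

lemma frac_class_eq: "((a, b), (c, d)) \<in> frac_rel R \<Longrightarrow> frac_class R (a, b) = frac_class R (c, d)"
  using equiv_class_eq_iff[OF equiv_frac_rel] by (simp add: frac_class_def)

lemma frac_class_self: "p \<in> frac_pairs R \<Longrightarrow> p \<in> frac_class R p"
  using equiv_class_self[OF equiv_frac_rel] by (simp add: frac_class_def)

lemma frac_classE: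
  assumes "q \<in> frac_class R (a, b)"
  obtains c d where "q = (c, d)" "((a, b), (c, d)) \<in> frac_rel R"
  using assms by (cases q) (auto simp: frac_class_def)

lemma frac_class_in_Frac: "p \<in> frac_pairs R \<Longrightarrow> frac_class R p \<in> carrier (Frac R)"
  unfolding Frac_def frac_class_def by (simp add: quotientI)

lemma Frac_carrierE:
  assumes "U \<in> carrier (Frac R)"
  obtains a b where "(a, b) \<in> frac_pairs R" "U = frac_class R (a, b)"
  using assms unfolding Frac_def frac_class_def by (auto elim!: quotientE)

lemma Frac_one_eq: "\<one>\<^bsub>Frac R\<^esub> = frac_class R (\<one>, \<one>)"
  by (simp add: Frac_def)

lemma Frac_mult_eq: "U \<otimes>\<^bsub>Frac R\<^esub> V = frac_mult R U V"
  by (simp add: Frac_def)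

lemma Frac_add_eq: "U \<oplus>\<^bsub>Frac R\<^esub> V = frac_add R U V"
  by (simp add: Frac_def)

lemma Frac_mult_class:
  assumes ab: "(a, b) \<in> frac_pairs R" and cd: "(c, d) \<in> frac_pairs R"
  shows "frac_class R (a, b) \<otimes>\<^bsub>Frac R\<^esub> frac_class R (c, d) = frac_class R (a \<otimes> c, b \<otimes> d)"
proof -
  have "frac_class R (p1 \<otimes> q1, p2 \<otimes> q2) = frac_class R (a \<otimes> c, b \<otimes> d)"
    if p: "((a, b), (p1, p2)) \<in> frac_rel R" and q: "((c, d), (q1, q2)) \<in> frac_rel R"
    for p1 p2 q1 q2
  proof (rule frac_class_eq)
    have pairs: "(p1, p2) \<in> frac_pairs R" "(q1, q2) \<in> frac_pairs R"
      and eq: "a \<otimes> p2 = p1 \<otimes> b" "c \<otimes> q2 = q1 \<otimes> d"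
      using p q unfolding frac_rel_iff by auto
    have R: "a \<in> carrier R" "b \<in> carrier R" "c \<in> carrier R" "d \<in> carrier R"
      "p1 \<in> carrier R" "p2 \<in> carrier R" "q1 \<in> carrier R" "q2 \<in> carrier R"
      using ab cd pairs unfolding frac_pairs_eq by auto
    have "(p1 \<otimes> q1) \<otimes> (b \<otimes> d) = (p1 \<otimes> b) \<otimes> (q1 \<otimes> d)" using R by (simp add: m_ac)
    also have "\<dots> = (a \<otimes> c) \<otimes> (p2 \<otimes> q2)" unfolding eq[symmetric] using R by (simp add: m_ac)
    finally show "((p1 \<otimes> q1, p2 \<otimes> q2), (a \<otimes> c, b \<otimes> d)) \<in> frac_rel R"
      unfolding frac_rel_iff using frac_pairs_closed(1) ab cd pairs by blast
  qed
  then show ?thesis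
    unfolding Frac_mult_eq frac_mult_def using frac_class_self[OF ab] frac_class_self[OF cd]
    by (intro Union_pairs_const[where f = "\<lambda>p q. frac_class R (fst p \<otimes> fst q, snd p \<otimes> snd q)"])
      (force elim: frac_classE)+
qed

lemma Frac_add_class:
  assumes ab: "(a, b) \<in> frac_pairs R" and cd: "(c, d) \<in> frac_pairs R"
  shows "frac_class R (a, b) \<oplus>\<^bsub>Frac R\<^esub> frac_class R (c, d)
    = frac_class R (a \<otimes> d \<oplus> c \<otimes> b, b \<otimes> d)"
proof -
  have "frac_class R (p1 \<otimes> q2 \<oplus> q1 \<otimes> p2, p2 \<otimes> q2) = frac_class R (a \<otimes> d \<oplus> c \<otimes> b, b \<otimes> d)"
    if p: "((a, b), (p1, p2)) \<in> frac_rel R" and q: "((c, d), (q1, q2)) \<in> frac_rel R"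
    for p1 p2 q1 q2
  proof (rule frac_class_eq)
    have pairs: "(p1, p2) \<in> frac_pairs R" "(q1, q2) \<in> frac_pairs R"
      and eq: "a \<otimes> p2 = p1 \<otimes> b" "c \<otimes> q2 = q1 \<otimes> d"
      using p q unfolding frac_rel_iff by auto
    have R: "a \<in> carrier R" "b \<in> carrier R" "c \<in> carrier R" "d \<in> carrier R"
      "p1 \<in> carrier R" "p2 \<in> carrier R" "q1 \<in> carrier R" "q2 \<in> carrier R"
      using ab cd pairs unfolding frac_pairs_eq by auto
    have "(p1 \<otimes> q2 \<oplus> q1 \<otimes> p2) \<otimes> (b \<otimes> d) = (p1 \<otimes> b) \<otimes> (q2 \<otimes> d) \<oplus> (q1 \<otimes> d) \<otimes> (p2 \<otimes> b)"
      using R by (simp add: m_ac l_distr r_distr)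
    also have "\<dots> = (a \<otimes> d \<oplus> c \<otimes> b) \<otimes> (p2 \<otimes> q2)"
      unfolding eq[symmetric] using R by (simp add: m_ac l_distr r_distr)
    finally show "((p1 \<otimes> q2 \<oplus> q1 \<otimes> p2, p2 \<otimes> q2), (a \<otimes> d \<oplus> c \<otimes> b, b \<otimes> d)) \<in> frac_rel R"
      unfolding frac_rel_iff using frac_pairs_closed(2) ab cd pairs by blast
  qed
  then show ?thesis
    unfolding Frac_add_eq frac_add_def using frac_class_self[OF ab] frac_class_self[OF cd]
    by (intro Union_pairs_const[where f = "\<lambda>p q.
        frac_class R (fst p \<otimes> snd q \<oplus> fst q \<otimes> snd p, snd p \<otimes> snd q)"])
      (force elim: frac_classE)+
qed

end

section \<open>Subrings of units\<close>

lemma (in cring) pointwise_inverse_Units: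
  assumes idem: "\<forall>e \<in> carrier R. e \<otimes> e = e \<longrightarrow> e = \<zero> \<or> e = \<one>"
    and inv: "pointwise_inverse R a b" and a: "a \<noteq> \<zero>"
  shows "a \<in> Units R"
proof -
  have aR: "a \<in> carrier R" and bR: "b \<in> carrier R" and aab: "a = a \<otimes> a \<otimes> b"
    using inv unfolding pointwise_inverse_def by auto
  have "(a \<otimes> b) \<otimes> (a \<otimes> b) = (a \<otimes> a \<otimes> b) \<otimes> b" using aR bR by (simp add: m_ac)
  also have "\<dots> = a \<otimes> b" using aab by simp
  finally have "a \<otimes> b = \<zero> \<or> a \<otimes> b = \<one>" using idem aR bR by auto
  moreover have "a \<otimes> b \<noteq> \<zero>"
  proof
    assume "a \<otimes> b = \<zero>"
    then have "a \<otimes> a \<otimes> b = \<zero>" using aR bR by (simp add: m_assoc)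
    then show False using aab a by simp
  qed
  ultimately have "a \<otimes> b = \<one>" "b \<otimes> a = \<one>" using aR bR m_comm by auto
  then show ?thesis using aR bR unfolding Units_def by blast
qed

locale invertible_subring = cring R + subring A R for A and R (structure) +
  assumes one_neq_zero: "\<one> \<noteq> \<zero>"
    and nonzero_Units: "a \<in> A \<Longrightarrow> a \<noteq> \<zero> \<Longrightarrow> a \<in> Units R"
begin

abbreviation A_ring :: "('a, 'b) ring_scheme" where
  "A_ring \<equiv> R\<lparr>carrier := A\<rparr>"

lemma subring_elem_carrier: "a \<in> A \<Longrightarrow> a \<in> carrier R"
  using subringE(1)[OF subring_axioms] by blast

lemma subring_closed:
  "\<zero> \<in> A" "\<one> \<in> A" "\<And>a. a \<in> A \<Longrightarrow> \<ominus> a \<in> A"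
  "\<And>a b. a \<in> A \<Longrightarrow> b \<in> A \<Longrightarrow> a \<otimes> b \<in> A" "\<And>a b. a \<in> A \<Longrightarrow> b \<in> A \<Longrightarrow> a \<oplus> b \<in> A"
  using subringE[OF subring_axioms] by auto

lemma cancel_nonzero:
  assumes "b \<in> A" "b \<noteq> \<zero>" "x \<in> carrier R" "y \<in> carrier R" "x \<otimes> b = y \<otimes> b"
  shows "x = y"
  using assms nonzero_Units[of b] Units_l_cancel[of b x y] subring_elem_carrier[of b]
  by (simp add: m_comm)

lemma mult_nonzero: "a \<in> A \<Longrightarrow> b \<in> A \<Longrightarrow> a \<noteq> \<zero> \<Longrightarrow> b \<noteq> \<zero> \<Longrightarrow> a \<otimes> b \<noteq> \<zero>"
  using cancel_nonzero[of b a \<zero>] subring_elem_carrier by auto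

lemma domain_subring: "domain A_ring"
proof -
  have "subdomain A R"
  proof (rule subdomain.intro)
    show "subcring A R" by (rule subcringI'[OF subring_axioms])
    show "subdomain_axioms A R"
      unfolding subdomain_axioms_def using one_neq_zero mult_nonzero by auto
  qed
  then show ?thesis using subdomain_iff[OF subringE(1)[OF subring_axioms]] by simp
qed

sublocale A_ring: "domain" A_ring
  by (rule domain_subring)

lemma frac_pairs_A_ring: "frac_pairs A_ring = A \<times> (A - {\<zero>})"
  by (simp add: frac_pairs_def)

definition fractions :: "'a set" where
  "fractions = {x \<in> carrier R. \<exists>a\<in>A. \<exists>b\<in>A. b \<noteq> \<zero> \<and> x \<otimes> b = a}"

lemma fractionsI:
  "x \<in> carrier R \<Longrightarrow> a \<in> A \<Longrightarrow> b \<in> A \<Longrightarrow> b \<noteq> \<zero> \<Longrightarrow> x \<otimes> b = a \<Longrightarrow> x \<in> fractions"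
  unfolding fractions_def by blast

lemma fractionsE:
  assumes "x \<in> fractions"
  obtains a b where "x \<in> carrier R" "a \<in> A" "b \<in> A" "b \<noteq> \<zero>" "x \<otimes> b = a"
  using assms unfolding fractions_def by blast

lemma subring_subset_fractions: "A \<subseteq> fractions"
proof
  fix a assume "a \<in> A"
  then show "a \<in> fractions"
    using subring_closed(2) one_neq_zero subring_elem_carrier by (intro fractionsI[of a a \<one>]) auto
qed

lemma fractions_subring: "subring fractions R"
proof (rule subringI)
  show "fractions \<subseteq> carrier R" unfolding fractions_def by auto
  show "\<one> \<in> fractions" using subring_subset_fractions subring_closed(2) by auto
next
  fix x assume "x \<in> fractions"
  then obtain a b where ab: "x \<in> carrier R" "a \<in> A" "b \<in> A" "b \<noteq> \<zero>" "x \<otimes> b = a"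
    by (rule fractionsE)
  have "(\<ominus> x) \<otimes> b = \<ominus> a" using ab subring_elem_carrier by (simp add: l_minus)
  then show "\<ominus> x \<in> fractions" using ab subring_closed(3) by (intro fractionsI) auto
next
  fix x y assume "x \<in> fractions" "y \<in> fractions"
  then obtain a b c d where ab: "x \<in> carrier R" "a \<in> A" "b \<in> A" "b \<noteq> \<zero>" "x \<otimes> b = a"
    and cd: "y \<in> carrier R" "c \<in> A" "d \<in> A" "d \<noteq> \<zero>" "y \<otimes> d = c"
    by (metis fractionsE)
  have bd: "b \<otimes> d \<in> A" "b \<otimes> d \<noteq> \<zero>" using ab cd subring_closed(4) mult_nonzero by auto
  have "(x \<otimes> y) \<otimes> (b \<otimes> d) = (x \<otimes> b) \<otimes> (y \<otimes> d)"
    using ab(1,3) cd(1,3) subring_elem_carrier by (simp add: m_ac)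
  then show "x \<otimes> y \<in> fractions"
    using ab cd bd subring_closed(4) by (intro fractionsI[of _ "a \<otimes> c" "b \<otimes> d"]) auto
  have "(x \<oplus> y) \<otimes> (b \<otimes> d) = (x \<otimes> b) \<otimes> d \<oplus> (y \<otimes> d) \<otimes> b"
    using ab(1,3) cd(1,3) subring_elem_carrier by (simp add: l_distr r_distr m_ac)
  then show "x \<oplus> y \<in> fractions"
    using ab cd bd subring_closed(4,5) by (intro fractionsI[of _ "a \<otimes> d \<oplus> c \<otimes> b" "b \<otimes> d"]) auto
qed

lemma fractions_inverse:
  assumes x: "x \<in> fractions" "x \<noteq> \<zero>"
  shows "\<exists>y\<in>fractions. x \<otimes> y = \<one>"
proof -
  obtain a b where ab: "x \<in> carrier R" "a \<in> A" "b \<in> A" "b \<noteq> \<zero>" "x \<otimes> b = a"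
    using x(1) by (rule fractionsE)
  have a0: "a \<noteq> \<zero>" using ab x(2) cancel_nonzero[of b x \<zero>] by auto
  have aU: "a \<in> Units R" using nonzero_Units ab a0 by auto
  let ?y = "b \<otimes> inv a"
  have yR: "?y \<in> carrier R" using aU ab subring_elem_carrier by auto
  have "?y \<otimes> a = b" using aU ab subring_elem_carrier by (simp add: m_assoc)
  then have "?y \<in> fractions" using yR ab a0 by (intro fractionsI[of ?y b a]) auto
  moreover have "x \<otimes> ?y = \<one>" using ab aU subring_elem_carrier by (simp flip: m_assoc)
  ultimately show ?thesis by blast
qed

lemma fractions_subfield: "subfield fractions R"
proof -
  have FR: "fractions \<subseteq> carrier R" using subringE(1)[OF fractions_subring] .
  have "cring (R\<lparr>carrier := fractions\<rparr>)"
    using subcring_iff[OF FR] subcringI'[OF fractions_subring] by simp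
  then have "field (R\<lparr>carrier := fractions\<rparr>)"
    by (rule cring.cring_fieldI2) (use one_neq_zero fractions_inverse in auto)
  then show ?thesis using subfield_iff(1)[OF _ FR] by simp
qed

definition frac_embed :: "('a \<times> 'a) set \<Rightarrow> 'a" where
  "frac_embed U = (let (a, b) = (SOME p. p \<in> U) in a \<otimes> inv b)"

lemma frac_embed_class:
  assumes ab: "(a, b) \<in> frac_pairs A_ring"
  shows "frac_embed (frac_class A_ring (a, b)) \<in> carrier R"
    "frac_embed (frac_class A_ring (a, b)) \<otimes> b = a"
proof -
  obtain c d where cd: "(SOME p. p \<in> frac_class A_ring (a, b)) = (c, d)"
    "((a, b), (c, d)) \<in> frac_rel A_ring"
    using someI[of "\<lambda>p. p \<in> frac_class A_ring (a, b)", OF A_ring.frac_class_self[OF ab]]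
    by (rule A_ring.frac_classE)
  then have A: "a \<in> A" "b \<in> A" "c \<in> A" "d \<in> A" and "d \<noteq> \<zero>" and eq: "a \<otimes> d = c \<otimes> b"
    unfolding A_ring.frac_rel_iff frac_pairs_A_ring by auto
  then have d: "d \<in> Units R" using nonzero_Units by blast
  note R = A[THEN subring_elem_carrier]
  have "c \<otimes> inv d \<otimes> b = (a \<otimes> d) \<otimes> inv d" unfolding eq using R d by (simp add: m_ac)
  also have "\<dots> = a" using R d by (simp add: m_assoc)
  finally show "frac_embed (frac_class A_ring (a, b)) \<otimes> b = a"
    "frac_embed (frac_class A_ring (a, b)) \<in> carrier R"
    using R d by (simp_all add: frac_embed_def cd(1))
qed

lemma frac_embed_classI:
  assumes ab: "(a, b) \<in> frac_pairs A_ring" and x: "x \<in> carrier R" "x \<otimes> b = a"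
  shows "frac_embed (frac_class A_ring (a, b)) = x"
  using ab frac_embed_class[OF ab] x cancel_nonzero[of b] unfolding frac_pairs_A_ring by auto

lemma frac_embed_hom: "frac_embed \<in> ring_hom (Frac A_ring) R"
proof (rule ring_hom_memI)
  fix U assume "U \<in> carrier (Frac A_ring)"
  then obtain a b where "(a, b) \<in> frac_pairs A_ring" "U = frac_class A_ring (a, b)"
    by (rule A_ring.Frac_carrierE)
  then show "frac_embed U \<in> carrier R" using frac_embed_class by simp
next
  fix U V assume "U \<in> carrier (Frac A_ring)" "V \<in> carrier (Frac A_ring)"
  then obtain a b c d where ab: "(a, b) \<in> frac_pairs A_ring" "U = frac_class A_ring (a, b)"
    and cd: "(c, d) \<in> frac_pairs A_ring" "V = frac_class A_ring (c, d)"
    by (metis A_ring.Frac_carrierE)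
  define x y where "x = frac_embed U" and "y = frac_embed V"
  have x: "x \<in> carrier R" "x \<otimes> b = a" and y: "y \<in> carrier R" "y \<otimes> d = c"
    unfolding x_def y_def ab(2) cd(2) using frac_embed_class ab(1) cd(1) by auto
  have R: "b \<in> carrier R" "d \<in> carrier R"
    using ab(1) cd(1) subring_elem_carrier unfolding frac_pairs_A_ring by auto
  have xy: "x \<otimes> y \<in> carrier R" "x \<oplus> y \<in> carrier R" using x(1) y(1) by auto
  have "(x \<otimes> y) \<otimes> (b \<otimes> d) = (x \<otimes> b) \<otimes> (y \<otimes> d)" using x(1) y(1) R by (simp add: m_ac)
  then have "frac_embed (frac_class A_ring (a \<otimes> c, b \<otimes> d)) = x \<otimes> y"
    using frac_embed_classI[OF A_ring.frac_pairs_closed(1)[OF ab(1) cd(1)] xy(1)] x(2) y(2) by simp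
  then show "frac_embed (U \<otimes>\<^bsub>Frac A_ring\<^esub> V) = frac_embed U \<otimes> frac_embed V"
    using A_ring.Frac_mult_class[OF ab(1) cd(1)] unfolding x_def y_def ab(2) cd(2) by simp
  have "(x \<oplus> y) \<otimes> (b \<otimes> d) = (x \<otimes> b) \<otimes> d \<oplus> (y \<otimes> d) \<otimes> b"
    using x(1) y(1) R by (simp add: l_distr r_distr m_ac)
  then have "frac_embed (frac_class A_ring (a \<otimes> d \<oplus> c \<otimes> b, b \<otimes> d)) = x \<oplus> y"
    using frac_embed_classI[OF A_ring.frac_pairs_closed(2)[OF ab(1) cd(1)] xy(2)] x(2) y(2) by simp
  then show "frac_embed (U \<oplus>\<^bsub>Frac A_ring\<^esub> V) = frac_embed U \<oplus> frac_embed V"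
    using A_ring.Frac_add_class[OF ab(1) cd(1)] unfolding x_def y_def ab(2) cd(2) by simp
next
  show "frac_embed \<one>\<^bsub>Frac A_ring\<^esub> = \<one>"
    unfolding A_ring.Frac_one_eq using subring_closed(2) one_neq_zero
    by (intro frac_embed_classI) (auto simp: frac_pairs_A_ring)
qed

lemma inj_on_frac_embed: "inj_on frac_embed (carrier (Frac A_ring))"
proof (rule inj_onI)
  fix U V assume U: "U \<in> carrier (Frac A_ring)" and V: "V \<in> carrier (Frac A_ring)"
    and eq: "frac_embed U = frac_embed V"
  obtain a b where ab: "(a, b) \<in> frac_pairs A_ring" "U = frac_class A_ring (a, b)"
    using U by (rule A_ring.Frac_carrierE)
  obtain c d where cd: "(c, d) \<in> frac_pairs A_ring" "V = frac_class A_ring (c, d)"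
    using V by (rule A_ring.Frac_carrierE)
  define x where "x = frac_embed U"
  have x: "x \<in> carrier R" "x \<otimes> b = a" "x \<otimes> d = c"
    using frac_embed_class[OF ab(1)] frac_embed_class[OF cd(1)] eq
    unfolding x_def ab(2) cd(2) by auto
  have R: "b \<in> carrier R" "d \<in> carrier R"
    using ab(1) cd(1) subring_elem_carrier unfolding frac_pairs_A_ring by auto
  have "(x \<otimes> b) \<otimes> d = (x \<otimes> d) \<otimes> b" using x(1) R by (simp add: m_ac)
  then have "((a, b), (c, d)) \<in> frac_rel A_ring"
    unfolding x(2,3) A_ring.frac_rel_iff using ab(1) cd(1) by simp
  then show "U = V" unfolding ab(2) cd(2) by (rule A_ring.frac_class_eq)
qed

lemma frac_embed_image: "frac_embed ` carrier (Frac A_ring) = fractions"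
proof (intro equalityI subsetI)
  fix y assume "y \<in> frac_embed ` carrier (Frac A_ring)"
  then obtain U where U: "U \<in> carrier (Frac A_ring)" "y = frac_embed U" by blast
  obtain a b where ab: "(a, b) \<in> frac_pairs A_ring" "U = frac_class A_ring (a, b)"
    using U(1) by (rule A_ring.Frac_carrierE)
  show "y \<in> fractions"
    using frac_embed_class[OF ab(1)] ab(1) unfolding U(2) ab(2) frac_pairs_A_ring
    by (intro fractionsI[of _ a b]) auto
next
  fix y assume "y \<in> fractions"
  then obtain a b where ab: "y \<in> carrier R" "a \<in> A" "b \<in> A" "b \<noteq> \<zero>" "y \<otimes> b = a"
    by (rule fractionsE)
  then have p: "(a, b) \<in> frac_pairs A_ring" by (simp add: frac_pairs_A_ring)
  then have "frac_class A_ring (a, b) \<in> carrier (Frac A_ring)" by (rule A_ring.frac_class_in_Frac)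
  moreover have "frac_embed (frac_class A_ring (a, b)) = y" using frac_embed_classI[OF p ab(1,5)] .
  ultimately show "y \<in> frac_embed ` carrier (Frac A_ring)" by blast
qed

lemma frac_embed_iso:
  assumes "carrier R = fractions"
  shows "frac_embed \<in> ring_iso (Frac A_ring) R"
  unfolding ring_iso_def bij_betw_def
  using frac_embed_hom inj_on_frac_embed frac_embed_image assms by blast

lemma frac_embed_of_subring: "a \<in> A \<Longrightarrow> frac_embed (frac_class A_ring (a, \<one>)) = a"
  using subring_closed(2) one_neq_zero subring_elem_carrier
  by (intro frac_embed_classI) (auto simp: frac_pairs_A_ring)

end

theorem lemma3p6:
  fixes R :: "('a, 'm) ring_scheme" and S :: "('b, 'n) ring_scheme" and \<phi> :: "'a \<Rightarrow> 'b"
  assumes "cring R" and "cring S"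
    and "ring_epi R S \<phi>"
    and "\<one>\<^bsub>S\<^esub> \<noteq> \<zero>\<^bsub>S\<^esub>"
    and "\<forall>e \<in> carrier S. e \<otimes>\<^bsub>S\<^esub> e = e \<longrightarrow> e = \<zero>\<^bsub>S\<^esub> \<or> e = \<one>\<^bsub>S\<^esub>"
    and "\<forall>r \<in> carrier R. \<exists>b. pointwise_inverse S (\<phi> r) b"
  shows "domain (S\<lparr>carrier := \<phi> ` carrier R\<rparr>)
    \<and> (\<exists>\<psi>. \<psi> \<in> ring_iso (Frac (S\<lparr>carrier := \<phi> ` carrier R\<rparr>)) S
           \<and> (\<forall>a \<in> \<phi> ` carrier R.
                \<psi> (frac_class (S\<lparr>carrier := \<phi> ` carrier R\<rparr>) (a, \<one>\<^bsub>S\<^esub>)) = a))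
    \<and> field S"
proof -
  interpret R: cring R by fact
  interpret S: cring S by fact
  have hom: "\<phi> \<in> ring_hom R S" using assms(3) unfolding ring_epi_def by blast
  interpret \<phi>: ring_hom_ring R S \<phi>
    using ring_hom_ringI2[OF R.ring_axioms S.ring_axioms hom] .
  have "subring (\<phi> ` carrier R) S" by (rule \<phi>.img_is_subring[OF R.carrier_is_subring])
  moreover have "a \<in> Units S" if "a \<in> \<phi> ` carrier R" "a \<noteq> \<zero>\<^bsub>S\<^esub>" for a
    using that assms(5,6) S.pointwise_inverse_Units by blast
  ultimately interpret A: invertible_subring "\<phi> ` carrier R" S
    using assms(2,4) by (simp add: invertible_subring_def invertible_subring_axioms_def)
  interpret K: cring_subfield A.fractions S
    using assms(2) A.fractions_subfield by (rule cring_subfield.intro)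
  have fractions: "carrier S = A.fractions"
  proof (rule K.carrier_eq_subfield_if_epi)
    fix T :: "('b \<times> 'b) set ring" and g h
    assume "cring T" "g \<in> ring_hom S T" "h \<in> ring_hom S T" "\<forall>k\<in>A.fractions. g k = h k"
    then show "\<forall>s\<in>carrier S. g s = h s"
      using assms(3) A.subring_subset_fractions unfolding ring_epi_def by blast
  qed
  have "field S"
    using S.subfield_iff(2)[OF A.fractions_subfield] by (simp add: fractions[symmetric])
  then show ?thesis
    using A.domain_subring A.frac_embed_iso[OF fractions] A.frac_embed_of_subring by blast
qed

end
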